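(* Let $R=kQ/I$ be a string algebra with no DOZE, and suppose $Q$ has a band having at least one entering arrow $\beta$ and at least one exiting arrow $\alpha$. Then $(Q,I)$ has no double-zero.
   Context: A string algebra is $R=kQ/I$ with $I$ generated by paths, each vertex having at most two incoming and two outgoing arrows, and for each arrow $\alpha:x\to y$ at most one arrow $\beta$ from $y$ with $\alpha\beta\notin I$ and at most one arrow $\gamma$ into $x$ with $\gamma\alpha\notin I$ (paths composed left to right). A walk is a sequence of arrows and inverse arrows, reduced if no subwalk $\alpha\alpha^{-1}$ or $\alpha^{-1}\alpha$. A string is a reduced walk containing no zero-relation; a band is a cyclic string, not a power of another cyclic string, all of whose powers are strings. An arrow entering (resp. exiting) a band is an arrow not on the band whose target (resp. source) lies on the band. A double-zero is a reduced walk $\rho_1\nu\rho_2$ with $\rho_1,\rho_2$ zero-relations (paths in $I$) traversed along their arrows and $\nu$ a walk; a DOZE is a double-zero $\rho_1\omega_1\omega_2\omega_3\rho_2$ with $\omega_1,\omega_3$ walks and $\omega_2$ a band. *)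

theory Defs
  imports Main "HOL-Library.Sublist"
begin

(* A bound quiver (Q, I): vertices, arrows, source/target maps, and the set of
   paths generating the monomial ideal I.  Paths are lists of arrows composed
   left to right. *)
record ('v, 'a) bquiver =
  verts :: "'v set"
  arrs  :: "'a set"
  src   :: "'a \<Rightarrow> 'v"
  tgt   :: "'a \<Rightarrow> 'v"
  rels  :: "'a list set"

datatype 'a letter = Dir 'a | Inv 'a

fun arr_of :: "'a letter \<Rightarrow> 'a" where
  "arr_of (Dir a) = a" | "arr_of (Inv a) = a"

fun inv_letter :: "'a letter \<Rightarrow> 'a letter" where
  "inv_letter (Dir a) = Inv a" | "inv_letter (Inv a) = Dir a"

fun lsrc :: "('v, 'a, 'z) bquiver_scheme \<Rightarrow> 'a letter \<Rightarrow> 'v" where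
  "lsrc Q (Dir a) = src Q a" | "lsrc Q (Inv a) = tgt Q a"

fun ltgt :: "('v, 'a, 'z) bquiver_scheme \<Rightarrow> 'a letter \<Rightarrow> 'v" where
  "ltgt Q (Dir a) = tgt Q a" | "ltgt Q (Inv a) = src Q a"

definition inv_walk :: "'a letter list \<Rightarrow> 'a letter list" where
  "inv_walk w = rev (map inv_letter w)"

definition is_path :: "('v, 'a, 'z) bquiver_scheme \<Rightarrow> 'a list \<Rightarrow> bool" where
  "is_path Q p \<longleftrightarrow> p \<noteq> [] \<and> set p \<subseteq> arrs Q \<and>
     (\<forall>i. Suc i < length p \<longrightarrow> tgt Q (p ! i) = src Q (p ! Suc i))"

(* a path lies in the ideal I generated by the paths rels Q iff it contains
   one of the generating paths as a subpath *)
definition in_I :: "('v, 'a, 'z) bquiver_scheme \<Rightarrow> 'a list \<Rightarrow> bool" where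
  "in_I Q p \<longleftrightarrow> is_path Q p \<and> (\<exists>r \<in> rels Q. sublist r p)"

(* a walk: sequence of arrows and inverse arrows, consecutive letters composable
   (the empty list represents a trivial walk) *)
definition is_walk :: "('v, 'a, 'z) bquiver_scheme \<Rightarrow> 'a letter list \<Rightarrow> bool" where
  "is_walk Q w \<longleftrightarrow> arr_of ` set w \<subseteq> arrs Q \<and>
     (\<forall>i. Suc i < length w \<longrightarrow> ltgt Q (w ! i) = lsrc Q (w ! Suc i))"

definition reduced :: "'a letter list \<Rightarrow> bool" where
  "reduced w \<longleftrightarrow> (\<forall>i. Suc i < length w \<longrightarrow> w ! Suc i \<noteq> inv_letter (w ! i))"

definition contains_zero :: "('v, 'a, 'z) bquiver_scheme \<Rightarrow> 'a letter list \<Rightarrow> bool" where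
  "contains_zero Q w \<longleftrightarrow> (\<exists>p. in_I Q p \<and>
     (sublist (map Dir p) w \<or> sublist (inv_walk (map Dir p)) w))"

definition is_string :: "('v, 'a, 'z) bquiver_scheme \<Rightarrow> 'a letter list \<Rightarrow> bool" where
  "is_string Q w \<longleftrightarrow> is_walk Q w \<and> reduced w \<and> \<not> contains_zero Q w"

definition is_band :: "('v, 'a, 'z) bquiver_scheme \<Rightarrow> 'a letter list \<Rightarrow> bool" where
  "is_band Q b \<longleftrightarrow> b \<noteq> [] \<and> is_string Q b \<and> ltgt Q (last b) = lsrc Q (hd b) \<and>
     (\<forall>n\<ge>1. is_string Q (concat (replicate n b))) \<and>
     \<not> (\<exists>c k. k \<ge> 2 \<and> b = concat (replicate k c))"

definition band_vertices :: "('v, 'a, 'z) bquiver_scheme \<Rightarrow> 'a letter list \<Rightarrow> 'v set" where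
  "band_vertices Q b = lsrc Q ` set b"

definition entering_arrow :: "('v, 'a, 'z) bquiver_scheme \<Rightarrow> 'a letter list \<Rightarrow> 'a \<Rightarrow> bool" where
  "entering_arrow Q b \<beta> \<longleftrightarrow> \<beta> \<in> arrs Q \<and> \<beta> \<notin> arr_of ` set b \<and> tgt Q \<beta> \<in> band_vertices Q b"

definition exiting_arrow :: "('v, 'a, 'z) bquiver_scheme \<Rightarrow> 'a letter list \<Rightarrow> 'a \<Rightarrow> bool" where
  "exiting_arrow Q b \<alpha> \<longleftrightarrow> \<alpha> \<in> arrs Q \<and> \<alpha> \<notin> arr_of ` set b \<and> src Q \<alpha> \<in> band_vertices Q b"

definition is_double_zero :: "('v, 'a, 'z) bquiver_scheme \<Rightarrow> 'a letter list \<Rightarrow> bool" where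
  "is_double_zero Q w \<longleftrightarrow> is_walk Q w \<and> reduced w \<and>
     (\<exists>\<rho>1 \<nu> \<rho>2. in_I Q \<rho>1 \<and> in_I Q \<rho>2 \<and> w = map Dir \<rho>1 @ \<nu> @ map Dir \<rho>2)"

definition is_DOZE :: "('v, 'a, 'z) bquiver_scheme \<Rightarrow> 'a letter list \<Rightarrow> bool" where
  "is_DOZE Q w \<longleftrightarrow> is_walk Q w \<and> reduced w \<and>
     (\<exists>\<rho>1 \<omega>1 \<omega>2 \<omega>3 \<rho>2. in_I Q \<rho>1 \<and> in_I Q \<rho>2 \<and> is_band Q \<omega>2 \<and>
        w = map Dir \<rho>1 @ \<omega>1 @ \<omega>2 @ \<omega>3 @ map Dir \<rho>2)"

definition string_algebra :: "('v, 'a, 'z) bquiver_scheme \<Rightarrow> bool" where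
  "string_algebra Q \<longleftrightarrow>
     finite (verts Q) \<and> finite (arrs Q) \<and>
     (\<forall>a \<in> arrs Q. src Q a \<in> verts Q \<and> tgt Q a \<in> verts Q) \<and>
     (\<forall>r \<in> rels Q. is_path Q r \<and> length r \<ge> 2) \<and>
     (\<forall>x \<in> verts Q. card {a \<in> arrs Q. tgt Q a = x} \<le> 2 \<and> card {a \<in> arrs Q. src Q a = x} \<le> 2) \<and>
     (\<forall>\<alpha> \<in> arrs Q. card {\<beta> \<in> arrs Q. src Q \<beta> = tgt Q \<alpha> \<and> \<not> in_I Q [\<alpha>, \<beta>]} \<le> 1) \<and>
     (\<forall>\<alpha> \<in> arrs Q. card {\<gamma> \<in> arrs Q. tgt Q \<gamma> = src Q \<alpha> \<and> \<not> in_I Q [\<gamma>, \<alpha>]} \<le> 1)"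

definition connected_quiver :: "('v, 'a, 'z) bquiver_scheme \<Rightarrow> bool" where
  "connected_quiver Q \<longleftrightarrow> (\<forall>u \<in> verts Q. \<forall>v \<in> verts Q.
     (\<lambda>x y. \<exists>a \<in> arrs Q. (src Q a = x \<and> tgt Q a = y) \<or> (src Q a = y \<and> tgt Q a = x))\<^sup>*\<^sup>* u v)"

end

theory Submission
  imports Defs
begin

(*
  First, the string algebra conditions at the band give two "ports"
  (entering_port, exiting_port): a band arrow oo with \<beta> oo \<in> I and a band
  arrow ii with ii \<alpha> \<in> I, because at tgt \<beta> and src \<alpha> the band already uses
  the admissible continuations.  Now let W = \<rho>1 \<nu> \<rho>2 be a double zero; we
  build a DOZE, a contradiction.  If W passes through a band vertex inside \<nu>,
  splice a round of the band into W there.  If W meets the band only inside \<rho>1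
  (resp. \<rho>2), enter the band through \<beta> oo and continue along W from the last
  such vertex (resp. follow W to the first such vertex and leave through ii \<alpha>).
  If W avoids the band, a shortest walk from W to the band (a "bridge", which by
  minimality shares no arrow with W or the band) is used as a detour to reach it,
  in one of the same three ways.
*)

section \<open>Walks with prescribed end points\<close>

(* uv_walk Q u w v: w is a walk in Q from the vertex u to the vertex v.  Unlike
   is_walk, this records the end points, which also makes sense for w = []. *)
fun uv_walk :: "('v, 'a, 'z) bquiver_scheme \<Rightarrow> 'v \<Rightarrow> 'a letter list \<Rightarrow> 'v \<Rightarrow> bool" where
  "uv_walk Q u [] v \<longleftrightarrow> u = v"
| "uv_walk Q u (l # w) v \<longleftrightarrow> arr_of l \<in> arrs Q \<and> lsrc Q l = u \<and> uv_walk Q (ltgt Q l) w v"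

lemma uv_walk_append: "uv_walk Q u (xs @ ys) v \<longleftrightarrow> (\<exists>m. uv_walk Q u xs m \<and> uv_walk Q m ys v)"
  by (induction xs arbitrary: u) auto

lemma ltgt_inv [simp]: "ltgt Q (inv_letter l) = lsrc Q l" by (cases l) auto
lemma lsrc_inv [simp]: "lsrc Q (inv_letter l) = ltgt Q l" by (cases l) auto
lemma arr_of_inv [simp]: "arr_of (inv_letter l) = arr_of l" by (cases l) auto
lemma inv_inv [simp]: "inv_letter (inv_letter l) = l" by (cases l) auto
lemma inv_letter_eq_iff [simp]: "inv_letter a = inv_letter b \<longleftrightarrow> a = b" by (metis inv_inv)

lemma inv_walk_Nil [simp]: "inv_walk [] = []" by (simp add: inv_walk_def)
lemma inv_walk_Cons [simp]: "inv_walk (l # w) = inv_walk w @ [inv_letter l]"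
  by (simp add: inv_walk_def)
lemma inv_walk_append [simp]: "inv_walk (xs @ ys) = inv_walk ys @ inv_walk xs"
  by (simp add: inv_walk_def)
lemma inv_walk_inv [simp]: "inv_walk (inv_walk w) = w"
  by (simp add: inv_walk_def rev_map comp_def)
lemma inv_walk_Nil_iff [simp]: "inv_walk w = [] \<longleftrightarrow> w = []" by (simp add: inv_walk_def)
lemma set_inv_walk: "set (inv_walk w) = inv_letter ` set w" by (simp add: inv_walk_def)
lemma arrs_inv_walk [simp]: "arr_of ` set (inv_walk w) = arr_of ` set w"
  by (simp add: set_inv_walk image_image)
lemma hd_inv_walk: "w \<noteq> [] \<Longrightarrow> hd (inv_walk w) = inv_letter (last w)"
  by (simp add: inv_walk_def hd_rev last_map)
lemma last_inv_walk: "w \<noteq> [] \<Longrightarrow> last (inv_walk w) = inv_letter (hd w)"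
  by (simp add: inv_walk_def last_rev hd_map)

lemma uv_walk_inv: "uv_walk Q u w v \<Longrightarrow> uv_walk Q v (inv_walk w) u"
  by (induction w arbitrary: u) (auto simp: uv_walk_append)

lemma is_walk_Nil [simp]: "is_walk Q []" by (simp add: is_walk_def)

lemma is_walk_Cons: "is_walk Q (a # w) \<longleftrightarrow>
    arr_of a \<in> arrs Q \<and> is_walk Q w \<and> (w \<noteq> [] \<longrightarrow> ltgt Q a = lsrc Q (hd w))"
  unfolding is_walk_def by (cases w) (auto simp: All_less_Suc2)

lemma uv_walk_is_walk: "uv_walk Q u w v \<Longrightarrow> is_walk Q w"
  by (induction w arbitrary: u) (auto simp: is_walk_Cons neq_Nil_conv)

lemma is_walk_uv_walk: "is_walk Q w \<Longrightarrow> w \<noteq> [] \<Longrightarrow> uv_walk Q (lsrc Q (hd w)) w (ltgt Q (last w))"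
proof (induction w)
  case (Cons a w) then show ?case by (cases w) (auto simp: is_walk_Cons)
qed simp

lemma uv_walk_arrs: "uv_walk Q u w v \<Longrightarrow> arr_of ` set w \<subseteq> arrs Q"
  by (induction w arbitrary: u) auto

lemma uv_walk_hd: "uv_walk Q u w v \<Longrightarrow> w \<noteq> [] \<Longrightarrow> lsrc Q (hd w) = u"
  by (cases w) auto

lemma uv_walk_last: "uv_walk Q u w v \<Longrightarrow> w \<noteq> [] \<Longrightarrow> ltgt Q (last w) = v"
  by (induction w arbitrary: u) (auto simp: neq_Nil_conv)

lemma uv_walk_vertex_sets: "uv_walk Q u w v \<Longrightarrow> insert u (ltgt Q ` set w) = insert v (lsrc Q ` set w)"
  by (induction w arbitrary: u) auto

lemma closed_walk_vertices:
  assumes "uv_walk Q u w u" "w \<noteq> []"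
  shows "ltgt Q ` set w = lsrc Q ` set w"
proof -
  have "u \<in> lsrc Q ` set w" using uv_walk_hd[OF assms] assms(2) by (metis hd_in_set image_eqI)
  moreover have "u \<in> ltgt Q ` set w" using uv_walk_last[OF assms] assms(2) by (metis last_in_set image_eqI)
  ultimately show ?thesis using uv_walk_vertex_sets[OF assms(1)] by (metis insert_absorb)
qed

lemma letter_endpoints: "{src Q (arr_of l), tgt Q (arr_of l)} = {lsrc Q l, ltgt Q l}"
  by (cases l) auto

lemma reduced_Nil [simp]: "reduced []" by (simp add: reduced_def)

lemma reduced_Cons: "reduced (a # w) \<longleftrightarrow> reduced w \<and> (w \<noteq> [] \<longrightarrow> hd w \<noteq> inv_letter a)"
  unfolding reduced_def by (cases w) (auto simp: All_less_Suc2)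

lemma reduced_append: "reduced (xs @ ys) \<longleftrightarrow>
    reduced xs \<and> reduced ys \<and> (xs \<noteq> [] \<longrightarrow> ys \<noteq> [] \<longrightarrow> hd ys \<noteq> inv_letter (last xs))"
  by (induction xs) (auto simp: reduced_Cons)

lemma reduced_append_distinct_arrows:
  assumes "reduced xs" "reduced ys" "xs \<noteq> [] \<Longrightarrow> ys \<noteq> [] \<Longrightarrow> arr_of (last xs) \<noteq> arr_of (hd ys)"
  shows "reduced (xs @ ys)"
  using assms unfolding reduced_append by (metis arr_of_inv)

lemma distinct_arrows_no_backtrack: "arr_of x \<noteq> arr_of y \<Longrightarrow> y \<noteq> inv_letter x"
  by auto

lemma reduced_inv_walk [simp]: "reduced (inv_walk w) \<longleftrightarrow> reduced w"
  by (induction w) (auto simp: reduced_append reduced_Cons last_inv_walk)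

lemma reduced_infix: "reduced (xs @ ys @ zs) \<Longrightarrow> reduced ys"
  by (simp add: reduced_append)

lemma not_reduced_backtrack: "\<not> reduced w \<Longrightarrow> \<exists>xs l ys. w = xs @ l # inv_letter l # ys"
proof (induction w)
  case (Cons a w)
  show ?case
  proof (cases "reduced w")
    case True
    then obtain ys where "w = inv_letter a # ys" using Cons.prems by (auto simp: reduced_Cons neq_Nil_conv)
    then show ?thesis by (metis append_Nil)
  next
    case False
    then obtain xs l ys where "w = xs @ l # inv_letter l # ys" using Cons.IH by blast
    then show ?thesis by (metis append_Cons)
  qed
qed simp

lemma last_take_nth: "0 < p \<Longrightarrow> p \<le> length xs \<Longrightarrow> last (take p xs) = xs ! (p - 1)"
  by (subst last_conv_nth) (auto simp: min_def)

lemma cancel_backtrack: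
  assumes "uv_walk Q u w v" "\<not> reduced w"
  obtains w' where "uv_walk Q u w' v" "length w' < length w"
proof -
  obtain xs l ys where w: "w = xs @ l # inv_letter l # ys" using not_reduced_backtrack[OF assms(2)] by blast
  then have "uv_walk Q u (xs @ ys) v" using assms(1) by (auto simp: uv_walk_append)
  then show ?thesis using that w by simp
qed

definition vertex_at :: "('v, 'a, 'z) bquiver_scheme \<Rightarrow> 'v \<Rightarrow> 'a letter list \<Rightarrow> nat \<Rightarrow> 'v" where
  "vertex_at Q u w p = (u # map (ltgt Q) w) ! p"

lemma vertex_at_Suc: "p < length w \<Longrightarrow> vertex_at Q u w (Suc p) = ltgt Q (w ! p)"
  by (simp add: vertex_at_def)

lemma uv_walk_take_drop: "uv_walk Q u w v \<Longrightarrow> p \<le> length w \<Longrightarrow>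
    uv_walk Q u (take p w) (vertex_at Q u w p) \<and> uv_walk Q (vertex_at Q u w p) (drop p w) v"
proof (induction w arbitrary: u p)
  case (Cons l w)
  then show ?case by (cases p) (auto simp: vertex_at_def)
qed (simp add: vertex_at_def)

lemma vertex_at_lsrc: "uv_walk Q u w v \<Longrightarrow> p < length w \<Longrightarrow> lsrc Q (w ! p) = vertex_at Q u w p"
proof (induction w arbitrary: u p)
  case (Cons l w)
  then show ?case by (cases p) (auto simp: vertex_at_def)
qed simp

lemma uv_walk_drop_Suc: "uv_walk Q u w v \<Longrightarrow> q < length w \<Longrightarrow> uv_walk Q (ltgt Q (w ! q)) (drop (Suc q) w) v"
  using uv_walk_take_drop[of Q u w v "Suc q"] vertex_at_Suc[of q w Q u] by simp

lemma uv_walk_take_nth: "uv_walk Q u w v \<Longrightarrow> q < length w \<Longrightarrow> uv_walk Q u (take q w) (lsrc Q (w ! q))"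
  using uv_walk_take_drop[of Q u w v q] vertex_at_lsrc[of Q u w v q] by simp

lemma walk_arrow_endpoints:
  assumes "uv_walk Q u w v" "a \<in> arr_of ` set w"
  shows "src Q a \<in> vertex_at Q u w ` {..length w} \<and> tgt Q a \<in> vertex_at Q u w ` {..length w}"
proof -
  obtain r where r: "r < length w" "arr_of (w ! r) = a" using assms(2) by (metis imageE in_set_conv_nth)
  have "lsrc Q (w ! r) = vertex_at Q u w r" using vertex_at_lsrc[OF assms(1) r(1)] .
  moreover have "ltgt Q (w ! r) = vertex_at Q u w (Suc r)" using vertex_at_Suc[OF r(1), symmetric] .
  ultimately
  have "{lsrc Q (w ! r), ltgt Q (w ! r)} \<subseteq> vertex_at Q u w ` {..length w}" using r(1) by auto
  then show ?thesis using r(2) by (cases "w ! r") auto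
qed

lemma sublist_inv_walk: "sublist xs ys \<Longrightarrow> sublist (inv_walk xs) (inv_walk ys)"
proof -
  assume "sublist xs ys"
  then obtain ps ss where "ys = ps @ xs @ ss" unfolding sublist_def by blast
  then have "inv_walk ys = inv_walk ss @ inv_walk xs @ inv_walk ps" by simp
  then show ?thesis unfolding sublist_def by blast
qed

lemma contains_zero_inv: "contains_zero Q (inv_walk w) \<longleftrightarrow> contains_zero Q w"
proof -
  have inv: "sublist xs (inv_walk w) \<longleftrightarrow> sublist (inv_walk xs) w" for xs
    by (metis inv_walk_inv sublist_inv_walk)
  have "sublist (map Dir p) (inv_walk w) \<or> sublist (inv_walk (map Dir p)) (inv_walk w) \<longleftrightarrow>
        sublist (map Dir p) w \<or> sublist (inv_walk (map Dir p)) w" for p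
    using inv[of "map Dir p"] inv[of "inv_walk (map Dir p)"] by auto
  then show ?thesis unfolding contains_zero_def by blast
qed

lemma is_walk_inv: "is_walk Q (inv_walk w) \<longleftrightarrow> is_walk Q w"
proof -
  have *: "is_walk Q (inv_walk w)" if "is_walk Q w" for w
  proof (cases "w = []")
    case False
    show ?thesis using uv_walk_is_walk[OF uv_walk_inv[OF is_walk_uv_walk[OF that False]]] .
  qed simp
  show ?thesis using *[of w] *[of "inv_walk w"] by auto
qed

lemma is_string_inv: "is_string Q (inv_walk w) \<longleftrightarrow> is_string Q w"
  unfolding is_string_def by (simp add: is_walk_inv contains_zero_inv)

lemma concat_replicate_inv: "concat (replicate n (inv_walk b)) = inv_walk (concat (replicate n b))"
proof (induction n)
  case (Suc n)
  have comm: "concat (replicate m x) @ x = x @ concat (replicate m x)" for m and x :: "'b list"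
    by (induction m) auto
  show ?case using Suc comm[of n b] comm[of n "inv_walk b"] by simp
qed simp

lemma band_inv: "is_band Q b \<Longrightarrow> is_band Q (inv_walk b)"
  unfolding is_band_def
  by (auto simp: is_string_inv hd_inv_walk last_inv_walk concat_replicate_inv)
     (metis concat_replicate_inv inv_walk_inv)

lemma band_nonempty: "is_band Q b \<Longrightarrow> b \<noteq> []"
  unfolding is_band_def by blast

lemma band_closed: "is_band Q b \<Longrightarrow> uv_walk Q (lsrc Q (hd b)) b (lsrc Q (hd b))"
  unfolding is_band_def is_string_def by (metis is_walk_uv_walk)

lemma band_arrs: "is_band Q b \<Longrightarrow> arr_of ` set b \<subseteq> arrs Q"
  using band_closed uv_walk_arrs by metis

lemma band_power_reduced: "is_band Q b \<Longrightarrow> reduced (concat (replicate n b))"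
  unfolding is_band_def is_string_def by (cases n) (auto simp del: replicate_Suc)

lemma band_square_no_zero:
  assumes "is_band Q b" shows "\<not> contains_zero Q (b @ b)"
proof -
  have "is_string Q (concat (replicate 2 b))" using assms unfolding is_band_def by simp
  then show ?thesis unfolding is_string_def by (simp add: numeral_2_eq_2)
qed

lemma band_vertices_inv: "is_band Q b \<Longrightarrow> band_vertices Q (inv_walk b) = band_vertices Q b"
proof -
  assume band: "is_band Q b"
  have "ltgt Q ` set b = lsrc Q ` set b"
    using closed_walk_vertices[OF band_closed[OF band] band_nonempty[OF band]] .
  then show ?thesis by (simp add: band_vertices_def set_inv_walk image_image)
qed

lemma band_vertex_index: "c \<in> band_vertices Q b \<Longrightarrow> \<exists>k < length b. lsrc Q (b ! k) = c"
  unfolding band_vertices_def by (metis imageE in_set_conv_nth)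

lemma band_letter_endpoints:
  assumes "is_band Q b" "arr_of l \<in> arr_of ` set b"
  shows "lsrc Q l \<in> band_vertices Q b \<and> ltgt Q l \<in> band_vertices Q b"
proof -
  have ev: "ltgt Q ` set b = lsrc Q ` set b"
    using closed_walk_vertices[OF band_closed[OF assms(1)] band_nonempty[OF assms(1)]] .
  from assms(2) obtain l' where l': "l' \<in> set b" "arr_of l' = arr_of l" by auto
  have "{lsrc Q l, ltgt Q l} = {lsrc Q l', ltgt Q l'}"
    using letter_endpoints[of Q l] letter_endpoints[of Q l'] l'(2) by simp
  moreover have "{lsrc Q l', ltgt Q l'} \<subseteq> band_vertices Q b"
    using l'(1) ev unfolding band_vertices_def by blast
  ultimately show ?thesis by blast
qed

lemma band_through_arrow:
  assumes "is_band Q b" "x \<in> arr_of ` set b"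
  obtains D j where "is_band Q D" "band_vertices Q D = band_vertices Q b"
    "arr_of ` set D = arr_of ` set b" "j < length D" "D ! j = Dir x"
proof (cases "Dir x \<in> set b")
  case True
  then show ?thesis using that assms(1) by (metis in_set_conv_nth)
next
  case False
  then have "Inv x \<in> set b" using assms(2) by (metis arr_of.elims imageE)
  then have "Dir x \<in> set (inv_walk b)" by (force simp: set_inv_walk)
  then show ?thesis using that band_inv[OF assms(1)] band_vertices_inv[OF assms(1)]
    by (metis arrs_inv_walk in_set_conv_nth)
qed

lemma band_segment:
  assumes band: "is_band Q D" and k: "k < length D" and j: "j \<le> length D"
  shows "uv_walk Q (lsrc Q (D ! k)) (drop k D @ D @ take j D) (vertex_at Q (lsrc Q (hd D)) D j)
         \<and> reduced (drop k D @ D @ take j D)"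
proof
  let ?c = "lsrc Q (hd D)"
  have cl: "uv_walk Q ?c D ?c" by (rule band_closed[OF band])
  have "uv_walk Q (lsrc Q (D ! k)) (drop k D) ?c"
    using uv_walk_take_drop[OF cl, of k] vertex_at_lsrc[OF cl k] k by simp
  then show "uv_walk Q (lsrc Q (D ! k)) (drop k D @ D @ take j D) (vertex_at Q ?c D j)"
    using uv_walk_take_drop[OF cl j] cl by (auto simp: uv_walk_append)
  have "D @ D @ D = take k D @ (drop k D @ D @ take j D) @ drop j D" by simp
  moreover have "reduced (D @ D @ D)" using band_power_reduced[OF band, of 3] by (simp add: numeral_3_eq_3)
  ultimately show "reduced (drop k D @ D @ take j D)" by (metis reduced_infix)
qed

(* the closed walk which starts at the k-th vertex of a band, goes round it and then
   once more: it contains the band itself as a factor *)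
definition band_loop :: "'a letter list \<Rightarrow> nat \<Rightarrow> 'a letter list" where
  "band_loop b k = drop k b @ b @ take k b"

lemma set_band_loop [simp]: "set (band_loop b k) = set b"
  unfolding band_loop_def using set_drop_subset set_take_subset by fastforce

lemma band_loop_nonempty: "is_band Q b \<Longrightarrow> band_loop b k \<noteq> []"
  unfolding band_loop_def by (simp add: band_nonempty)

lemma band_loop_closed:
  assumes band: "is_band Q b" and k: "k < length b"
  shows "uv_walk Q (lsrc Q (b ! k)) (band_loop b k) (lsrc Q (b ! k))"
    and "reduced (band_loop b k @ band_loop b k)"
proof -
  have cl: "uv_walk Q (lsrc Q (hd b)) b (lsrc Q (hd b))" by (rule band_closed[OF band])
  show "uv_walk Q (lsrc Q (b ! k)) (band_loop b k) (lsrc Q (b ! k))"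
    using band_segment[OF band k, of k] vertex_at_lsrc[OF cl k] k unfolding band_loop_def by simp
  have "b @ b @ b @ b @ b = take k b @ (band_loop b k @ band_loop b k) @ drop k b"
    unfolding band_loop_def by (metis append.assoc append_take_drop_id)
  moreover have "reduced (b @ b @ b @ b @ b)"
    using band_power_reduced[OF band, of 5] by (simp add: eval_nat_numeral)
  ultimately show "reduced (band_loop b k @ band_loop b k)" by (metis reduced_infix)
qed

lemma band_turn:
  assumes band: "is_band Q b" and k: "k < length b"
  obtains P where "P \<in> set b" "ltgt Q P = lsrc Q (b ! k)" "b ! k \<noteq> inv_letter P"
    "sublist [P, b ! k] (b @ b)"
proof -
  define m where "m = k + length b - 1"
  have sm: "Suc m = k + length b" and sml: "Suc m < length (b @ b)" using k m_def by auto
  have nSm: "(b @ b) ! Suc m = b ! k" using sm by (simp add: nth_append)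
  have P: "(b @ b) ! m \<in> set b" using sml by (metis Suc_lessD nth_mem set_append Un_iff)
  have "reduced (b @ b)" using band_power_reduced[OF band, of 2] by (simp add: numeral_2_eq_2)
  then have ne: "b ! k \<noteq> inv_letter ((b @ b) ! m)" using sml nSm unfolding reduced_def by metis
  have w2: "uv_walk Q (lsrc Q (hd b)) (b @ b) (lsrc Q (hd b))"
    using band_closed[OF band] by (auto simp: uv_walk_append)
  have "ltgt Q ((b @ b) ! m) = vertex_at Q (lsrc Q (hd b)) (b @ b) (Suc m)"
    using sml by (simp add: vertex_at_Suc)
  then have "ltgt Q ((b @ b) ! m) = lsrc Q (b ! k)" using vertex_at_lsrc[OF w2 sml] nSm by simp
  moreover have "sublist [(b @ b) ! m, b ! k] (b @ b)"
    using sml nSm by (metis Cons_nth_drop_Suc Suc_lessD append_Cons append_Nil append_take_drop_id sublist_appendI)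
  ultimately show ?thesis using that P ne by blast
qed

lemma band_consecutive_Dir: "is_band Q b \<Longrightarrow> sublist [Dir x, Dir y] (b @ b) \<Longrightarrow> \<not> in_I Q [x, y]"
  using band_square_no_zero unfolding contains_zero_def by fastforce

lemma band_consecutive_Inv: "is_band Q b \<Longrightarrow> sublist [Inv y, Inv x] (b @ b) \<Longrightarrow> \<not> in_I Q [x, y]"
  using band_square_no_zero unfolding contains_zero_def by (fastforce simp: inv_walk_def)

section \<open>Local consequences of the string algebra conditions\<close>

lemma string_algebra_props:
  assumes "string_algebra Q"
  shows "finite (arrs Q)"
    and "\<And>a. a \<in> arrs Q \<Longrightarrow> src Q a \<in> verts Q \<and> tgt Q a \<in> verts Q"
    and "\<And>x. x \<in> verts Q \<Longrightarrow> card {a \<in> arrs Q. tgt Q a = x} \<le> 2"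
    and "\<And>x. x \<in> verts Q \<Longrightarrow> card {a \<in> arrs Q. src Q a = x} \<le> 2"
    and "\<And>a. a \<in> arrs Q \<Longrightarrow> card {c \<in> arrs Q. src Q c = tgt Q a \<and> \<not> in_I Q [a, c]} \<le> 1"
    and "\<And>a. a \<in> arrs Q \<Longrightarrow> card {c \<in> arrs Q. tgt Q c = src Q a \<and> \<not> in_I Q [c, a]} \<le> 1"
  using assms unfolding string_algebra_def by auto

lemma letter_source_vertex:
  assumes "string_algebra Q" "arr_of l \<in> arrs Q" shows "lsrc Q l \<in> verts Q"
  using string_algebra_props(2)[OF assms] by (cases l) auto

lemma unique_predecessor:
  assumes SA: "string_algebra Q" and arrows: "x \<in> arrs Q" "y \<in> arrs Q" "z \<in> arrs Q"
    and composable: "tgt Q x = src Q y" "tgt Q z = src Q y"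
    and nonzero: "\<not> in_I Q [x, y]" "\<not> in_I Q [z, y]"
  shows "x = z"
proof -
  let ?P = "{c \<in> arrs Q. tgt Q c = src Q y \<and> \<not> in_I Q [c, y]}"
  have "card ?P \<le> 1" using string_algebra_props(6)[OF SA arrows(2)] .
  moreover have "finite ?P" using string_algebra_props(1)[OF SA] by simp
  moreover have "x \<in> ?P" "z \<in> ?P" using arrows composable nonzero by simp_all
  ultimately show ?thesis using card_le_Suc0_iff_eq[of ?P] by (simp only: One_nat_def)
qed

lemma unique_successor:
  assumes SA: "string_algebra Q" and arrows: "x \<in> arrs Q" "y \<in> arrs Q" "z \<in> arrs Q"
    and composable: "src Q y = tgt Q x" "src Q z = tgt Q x"
    and nonzero: "\<not> in_I Q [x, y]" "\<not> in_I Q [x, z]"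
  shows "y = z"
proof -
  let ?S = "{c \<in> arrs Q. src Q c = tgt Q x \<and> \<not> in_I Q [x, c]}"
  have "card ?S \<le> 1" using string_algebra_props(5)[OF SA arrows(1)] .
  moreover have "finite ?S" using string_algebra_props(1)[OF SA] by simp
  moreover have "y \<in> ?S" "z \<in> ?S" using arrows composable nonzero by simp_all
  ultimately show ?thesis using card_le_Suc0_iff_eq[of ?S] by (simp only: One_nat_def)
qed

lemma card_le_2_no_three:
  assumes "finite A" "card A \<le> 2" "{x, y, z} \<subseteq> A"
  shows "x = y \<or> x = z \<or> y = z"
proof (rule ccontr)
  assume "\<not> ?thesis"
  then have "card {x, y, z} = 3" by simp
  moreover have "card {x, y, z} \<le> card A" using assms by (intro card_mono)
  ultimately show False using assms(2) by simp
qed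

lemma no_three_incoming:
  assumes SA: "string_algebra Q" and "{x, y, z} \<subseteq> arrs Q" "tgt Q y = tgt Q x" "tgt Q z = tgt Q x"
  shows "x = y \<or> x = z \<or> y = z"
proof -
  let ?In = "{a \<in> arrs Q. tgt Q a = tgt Q x}"
  have "tgt Q x \<in> verts Q" using string_algebra_props(2)[OF SA] assms(2) by blast
  then have "finite ?In" "card ?In \<le> 2" using string_algebra_props(1,3)[OF SA] by simp_all
  then show ?thesis by (rule card_le_2_no_three) (use assms(2-4) in simp)
qed

lemma no_three_outgoing:
  assumes SA: "string_algebra Q" and "{x, y, z} \<subseteq> arrs Q" "src Q y = src Q x" "src Q z = src Q x"
  shows "x = y \<or> x = z \<or> y = z"
proof -
  let ?Out = "{a \<in> arrs Q. src Q a = src Q x}"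
  have "src Q x \<in> verts Q" using string_algebra_props(2)[OF SA] assms(2) by blast
  then have "finite ?Out" "card ?Out \<le> 2" using string_algebra_props(1,4)[OF SA] by simp_all
  then show ?thesis by (rule card_le_2_no_three) (use assms(2-4) in simp)
qed

(* An arrow \<beta> entering a band is followed by a band arrow oo with \<beta> oo \<in> I: at
   tgt \<beta> the band already uses the admissible continuations.  The four cases
   are the orientations of the two band letters P, N meeting at tgt \<beta>. *)
lemma entering_port:
  assumes SA: "string_algebra Q" and band: "is_band Q b" and en: "entering_arrow Q b \<beta>"
  shows "\<exists>oo \<in> arr_of ` set b. in_I Q [\<beta>, oo]"
proof -
  have \<beta>: "\<beta> \<in> arrs Q" "\<beta> \<notin> arr_of ` set b" "tgt Q \<beta> \<in> band_vertices Q b"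
    using en unfolding entering_arrow_def by auto
  obtain k where k: "k < length b" "lsrc Q (b ! k) = tgt Q \<beta>" using band_vertex_index[OF \<beta>(3)] by blast
  define N where "N = b ! k"
  obtain P where P: "P \<in> set b" "ltgt Q P = lsrc Q N" "N \<noteq> inv_letter P" "sublist [P, N] (b @ b)"
    using band_turn[OF band k(1)] N_def by blast
  have on_band: "arr_of P \<in> arr_of ` set b" "arr_of N \<in> arr_of ` set b" using P(1) k(1) N_def by auto
  have arrs: "arr_of P \<in> arrs Q" "arr_of N \<in> arrs Q" using band_arrs[OF band] on_band by auto
  have new: "\<beta> \<noteq> arr_of P" "\<beta> \<noteq> arr_of N" using \<beta>(2) on_band by auto
  have at: "ltgt Q P = tgt Q \<beta>" "lsrc Q N = tgt Q \<beta>" using P(2) k(2) N_def by simp_all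
  show ?thesis
  proof (cases N; cases P)
    fix o1 i1 assume NP: "N = Dir o1" "P = Dir i1"
    have "in_I Q [\<beta>, o1]"
    proof (rule ccontr)
      assume "\<not> in_I Q [\<beta>, o1]"
      then have "i1 = \<beta>"
        by (rule unique_predecessor[OF SA, of i1 o1 \<beta>, rotated -1])
           (use arrs \<beta>(1) at NP band_consecutive_Dir[OF band] P(4) in simp_all)
      then show False using new NP by simp
    qed
    then show ?thesis using on_band NP by auto
  next
    fix o1 o2 assume NP: "N = Dir o1" "P = Inv o2"
    have "in_I Q [\<beta>, o1] \<or> in_I Q [\<beta>, o2]"
    proof (rule ccontr)
      assume "\<not> ?thesis"
      then have "o1 = o2"
        using unique_successor[OF SA, of \<beta> o1 o2] arrs \<beta>(1) at NP by simp
      then show False using P(3) NP by simp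
    qed
    then show ?thesis using on_band NP by auto
  next
    fix i1 i2 assume NP: "N = Inv i1" "P = Dir i2"
    have "\<beta> = i1 \<or> \<beta> = i2 \<or> i1 = i2"
      by (rule no_three_incoming[OF SA]) (use arrs \<beta>(1) at NP in simp_all)
    then show ?thesis using new P(3) NP by simp
  next
    fix i1 o2 assume NP: "N = Inv i1" "P = Inv o2"
    have "in_I Q [\<beta>, o2]"
    proof (rule ccontr)
      assume "\<not> in_I Q [\<beta>, o2]"
      then have "i1 = \<beta>"
        by (rule unique_predecessor[OF SA, of i1 o2 \<beta>, rotated -1])
           (use arrs \<beta>(1) at NP band_consecutive_Inv[OF band] P(4) in simp_all)
      then show False using new NP by simp
    qed
    then show ?thesis using on_band NP by auto
  qed
qed

lemma exiting_port:
  assumes SA: "string_algebra Q" and band: "is_band Q b" and ex: "exiting_arrow Q b \<alpha>"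
  shows "\<exists>ii \<in> arr_of ` set b. in_I Q [ii, \<alpha>]"
proof -
  have \<alpha>: "\<alpha> \<in> arrs Q" "\<alpha> \<notin> arr_of ` set b" "src Q \<alpha> \<in> band_vertices Q b"
    using ex unfolding exiting_arrow_def by auto
  obtain k where k: "k < length b" "lsrc Q (b ! k) = src Q \<alpha>" using band_vertex_index[OF \<alpha>(3)] by blast
  define N where "N = b ! k"
  obtain P where P: "P \<in> set b" "ltgt Q P = lsrc Q N" "N \<noteq> inv_letter P" "sublist [P, N] (b @ b)"
    using band_turn[OF band k(1)] N_def by blast
  have on_band: "arr_of P \<in> arr_of ` set b" "arr_of N \<in> arr_of ` set b" using P(1) k(1) N_def by auto
  have arrs: "arr_of P \<in> arrs Q" "arr_of N \<in> arrs Q" using band_arrs[OF band] on_band by auto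
  have new: "\<alpha> \<noteq> arr_of P" "\<alpha> \<noteq> arr_of N" using \<alpha>(2) on_band by auto
  have at: "ltgt Q P = src Q \<alpha>" "lsrc Q N = src Q \<alpha>" using P(2) k(2) N_def by simp_all
  show ?thesis
  proof (cases P; cases N)
    fix i1 o1 assume PN: "P = Dir i1" "N = Dir o1"
    have "in_I Q [i1, \<alpha>]"
    proof (rule ccontr)
      assume "\<not> in_I Q [i1, \<alpha>]"
      then have "o1 = \<alpha>"
        by (rule unique_successor[OF SA, of i1 o1 \<alpha>, rotated -1])
           (use arrs \<alpha>(1) at PN band_consecutive_Dir[OF band] P(4) in simp_all)
      then show False using new PN by simp
    qed
    then show ?thesis using on_band PN by auto
  next
    fix i1 i2 assume PN: "P = Dir i1" "N = Inv i2"
    have "in_I Q [i1, \<alpha>] \<or> in_I Q [i2, \<alpha>]"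
    proof (rule ccontr)
      assume "\<not> ?thesis"
      then have "i1 = i2"
        using unique_predecessor[OF SA, of i1 \<alpha> i2] arrs \<alpha>(1) at PN by simp
      then show False using P(3) PN by simp
    qed
    then show ?thesis using on_band PN by auto
  next
    fix o2 o1 assume PN: "P = Inv o2" "N = Dir o1"
    have "\<alpha> = o1 \<or> \<alpha> = o2 \<or> o1 = o2"
      by (rule no_three_outgoing[OF SA]) (use arrs \<alpha>(1) at PN in simp_all)
    then show ?thesis using new P(3) PN by simp
  next
    fix o2 i1 assume PN: "P = Inv o2" "N = Inv i1"
    have "in_I Q [i1, \<alpha>]"
    proof (rule ccontr)
      assume "\<not> in_I Q [i1, \<alpha>]"
      then have "o2 = \<alpha>"
        by (rule unique_successor[OF SA, of i1 o2 \<alpha>, rotated -1])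
           (use arrs \<alpha>(1) at PN band_consecutive_Inv[OF band] P(4) in simp_all)
      then show False using new PN by simp
    qed
    then show ?thesis using on_band PN by auto
  qed
qed

section \<open>Assembling a DOZE\<close>

lemma in_I_nonempty: "in_I Q r \<Longrightarrow> r \<noteq> []"
  unfolding in_I_def is_path_def by simp

lemma in_I_pair: "in_I Q [x, y] \<Longrightarrow> x \<in> arrs Q \<and> y \<in> arrs Q \<and> tgt Q x = src Q y"
  unfolding in_I_def is_path_def by (auto dest: spec[of _ 0])

lemma doze_of_parts:
  assumes "uv_walk Q s w t" "reduced w" "w = map Dir r1 @ Y1 @ D @ Y3 @ map Dir r2"
    and "in_I Q r1" "in_I Q r2" "is_band Q D"
  shows "is_DOZE Q w"
  unfolding is_DOZE_def
  by (intro conjI exI[where x = r1] exI[where x = Y1] exI[where x = D] exI[where x = Y3]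
      exI[where x = r2] uv_walk_is_walk[OF assms(1)] assms(2-6))

lemma doze_by_inserting_loop:
  assumes H: "uv_walk Q s H m" "reduced H" "H = map Dir r1 @ H0" "in_I Q r1"
    and T: "uv_walk Q m T t" "reduced T" "T = T0 @ map Dir r2" "in_I Q r2"
    and L: "uv_walk Q m L m" "reduced L" "L = Y1 @ D @ Y3" "is_band Q D"
    and joints: "hd L \<noteq> inv_letter (last H)" "hd T \<noteq> inv_letter (last L)"
  shows "\<exists>w. is_DOZE Q w"
proof -
  have "L \<noteq> []" using L(3) band_nonempty[OF L(4)] by simp
  then have red: "reduced (H @ L @ T)" using H(2) T(2) L(2) joints by (simp add: reduced_append)
  have walk: "uv_walk Q s (H @ L @ T) t" using H(1) L(1) T(1) by (auto simp: uv_walk_append)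
  have shape: "H @ L @ T = map Dir r1 @ (H0 @ Y1) @ D @ (Y3 @ T0) @ map Dir r2"
    using H(3) T(3) L(3) by simp
  have "is_DOZE Q (H @ L @ T)" by (rule doze_of_parts[OF walk red shape H(4) T(4) L(4)])
  then show ?thesis by blast
qed

(* for letters A, B with no backtrack A B, and a closed walk with first letter y1 and
   last letter y2 (y2 y1 no backtrack), the walk fits between A and B in one of its
   two directions *)
lemma loop_fits_one_way:
  assumes "B \<noteq> inv_letter A" "y1 \<noteq> inv_letter y2"
  shows "(y1 \<noteq> inv_letter A \<and> B \<noteq> inv_letter y2) \<or> (y2 \<noteq> A \<and> B \<noteq> y1)"
  using assms by (cases A; cases B; cases y1; cases y2) auto

(* a walk \<rho>1 \<dots> \<rho>2 passing through a band vertex m between its zero relations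
   yields a DOZE: go once round the band at m, in a suitable direction *)
lemma doze_at_band_vertex:
  assumes H: "uv_walk Q s H m" "reduced H" "H = map Dir r1 @ H0" "in_I Q r1"
    and T: "uv_walk Q m T t" "reduced T" "T = T0 @ map Dir r2" "in_I Q r2"
    and joint: "hd T \<noteq> inv_letter (last H)"
    and band: "is_band Q b" and m: "m \<in> band_vertices Q b"
  shows "\<exists>w. is_DOZE Q w"
proof -
  obtain k where k: "k < length b" "lsrc Q (b ! k) = m" using band_vertex_index[OF m] by blast
  define Y where "Y = band_loop b k"
  have Yw: "uv_walk Q m Y m" using band_loop_closed(1)[OF band k(1)] k(2) Y_def by simp
  have Yne: "Y \<noteq> []" using band_loop_nonempty[OF band] Y_def by simp
  have shape: "Y = drop k b @ b @ take k b" using Y_def band_loop_def by simp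
  have "reduced (Y @ Y)" using band_loop_closed(2)[OF band k(1)] Y_def by simp
  then have Yr: "reduced Y" and Yjoint: "hd Y \<noteq> inv_letter (last Y)"
    using Yne by (simp_all add: reduced_append)
  from loop_fits_one_way[OF joint Yjoint] show ?thesis
  proof
    assume "hd Y \<noteq> inv_letter (last H) \<and> hd T \<noteq> inv_letter (last Y)"
    then show ?thesis using doze_by_inserting_loop[OF H T Yw Yr shape band] by blast
  next
    assume fits: "last Y \<noteq> last H \<and> hd T \<noteq> hd Y"
    have walk: "uv_walk Q m (inv_walk Y) m" using uv_walk_inv[OF Yw] .
    have red: "reduced (inv_walk Y)" using Yr by simp
    have inv_shape: "inv_walk Y = inv_walk (take k b) @ inv_walk b @ inv_walk (drop k b)"
      using shape by simp
    have "hd (inv_walk Y) \<noteq> inv_letter (last H)" "hd T \<noteq> inv_letter (last (inv_walk Y))"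
      using fits Yne by (simp_all add: hd_inv_walk last_inv_walk)
    then show ?thesis using doze_by_inserting_loop[OF H T walk red inv_shape band_inv[OF band]] by blast
  qed
qed

(* Entering the band along \<beta> oo (a zero relation), going once round it and then
   following a walk T that leaves the band and ends with a zero relation gives a DOZE. *)
lemma doze_by_entering:
  assumes band: "is_band Q b" and port: "in_I Q [\<beta>, oo]" "oo \<in> arr_of ` set b"
    and T: "uv_walk Q c T t" "c \<in> band_vertices Q b" "reduced T" "T \<noteq> []"
      "arr_of (hd T) \<notin> arr_of ` set b" "T = T0 @ map Dir r2" "in_I Q r2"
  shows "\<exists>w. is_DOZE Q w"
proof -
  obtain D j where D: "is_band Q D" "band_vertices Q D = band_vertices Q b"
      "arr_of ` set D = arr_of ` set b" "j < length D" "D ! j = Dir oo"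
    using band_through_arrow[OF band port(2)] by blast
  obtain k where k: "k < length D" "lsrc Q (D ! k) = c" using band_vertex_index[of c Q D] T(2) D(2) by blast
  define Z where "Z = drop j D @ D @ take k D"
  have cl: "uv_walk Q (lsrc Q (hd D)) D (lsrc Q (hd D))" by (rule band_closed[OF D(1)])
  have Z: "uv_walk Q (tgt Q \<beta>) Z c" "reduced Z"
    using band_segment[OF D(1) D(4), of k] vertex_at_lsrc[OF cl k(1)] k D(5) in_I_pair[OF port(1)] Z_def
    by auto
  have Zne: "Z \<noteq> []" and hdZ: "hd Z = Dir oo" using D(4,5) Z_def by (simp_all add: hd_drop_conv_nth)
  have "set Z \<subseteq> set D" using set_drop_subset[of j D] set_take_subset[of k D] Z_def by auto
  then have "arr_of (last Z) \<in> arr_of ` set b" using last_in_set[OF Zne] D(3) by blast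
  then have "reduced (Z @ T)" using reduced_append_distinct_arrows[OF Z(2) T(3)] T(5) by metis
  then have red: "reduced (Dir \<beta> # Z @ T)" using Zne hdZ by (simp add: reduced_Cons)
  have walk: "uv_walk Q (src Q \<beta>) (Dir \<beta> # Z @ T) t"
    using Z(1) T(1) in_I_pair[OF port(1)] by (auto simp: uv_walk_append)
  have shape: "Dir \<beta> # Z @ T = map Dir [\<beta>, oo] @ drop (Suc j) D @ D @ (take k D @ T0) @ map Dir r2"
    using D(4,5) T(6) Z_def by (simp add: Cons_nth_drop_Suc[symmetric])
  have "is_DOZE Q (Dir \<beta> # Z @ T)" by (rule doze_of_parts[OF walk red shape port(1) T(7) D(1)])
  then show ?thesis by blast
qed

(* Symmetrically: a walk H starting with a zero relation and arriving at the band
   from outside, followed by a round of the band and the zero relation ii \<alpha>. *)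
lemma doze_by_exiting:
  assumes band: "is_band Q b" and port: "in_I Q [ii, \<alpha>]" "ii \<in> arr_of ` set b"
    and H: "uv_walk Q s H c" "c \<in> band_vertices Q b" "reduced H" "H \<noteq> []"
      "arr_of (last H) \<notin> arr_of ` set b" "H = map Dir r1 @ H0" "in_I Q r1"
  shows "\<exists>w. is_DOZE Q w"
proof -
  obtain D j where D: "is_band Q D" "band_vertices Q D = band_vertices Q b"
      "arr_of ` set D = arr_of ` set b" "j < length D" "D ! j = Dir ii"
    using band_through_arrow[OF band port(2)] by blast
  obtain k where k: "k < length D" "lsrc Q (D ! k) = c" using band_vertex_index[of c Q D] H(2) D(2) by blast
  define Z where "Z = drop k D @ D @ take (Suc j) D"
  have Z: "uv_walk Q c Z (tgt Q ii)" "reduced Z"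
    using band_segment[OF D(1) k(1), of "Suc j"] vertex_at_Suc[of j D Q] k D(4,5) Z_def by auto
  have take: "take (Suc j) D = take j D @ [Dir ii]" using D(4,5) by (simp add: take_Suc_conv_app_nth)
  have "last Z = Dir ii" using take Z_def by simp
  then have "reduced (Z @ [Dir \<alpha>])" using Z(2) reduced_append[of Z "[Dir \<alpha>]"] by (simp add: reduced_Cons)
  moreover have "arr_of (D ! k) \<in> arr_of ` set b" using nth_mem[OF k(1)] D(3) by blast
  then have "arr_of (hd (Z @ [Dir \<alpha>])) \<in> arr_of ` set b" using k(1) Z_def by (simp add: hd_drop_conv_nth)
  ultimately have red: "reduced (H @ Z @ [Dir \<alpha>])"
    using reduced_append_distinct_arrows[OF H(3)] H(5) by (metis append_is_Nil_conv)
  have walk: "uv_walk Q s (H @ Z @ [Dir \<alpha>]) (tgt Q \<alpha>)"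
    using H(1) Z(1) in_I_pair[OF port(1)] by (auto simp: uv_walk_append)
  have shape: "H @ Z @ [Dir \<alpha>] = map Dir r1 @ (H0 @ drop k D) @ D @ take j D @ map Dir [ii, \<alpha>]"
    using H(6) take Z_def by simp
  have "is_DOZE Q (H @ Z @ [Dir \<alpha>])" by (rule doze_of_parts[OF walk red shape H(7) port(1) D(1)])
  then show ?thesis by blast
qed

section \<open>Connecting walks\<close>

lemma connected_walk:
  assumes "connected_quiver Q" "u \<in> verts Q" "v \<in> verts Q"
  shows "\<exists>w. uv_walk Q u w v"
proof -
  let ?R = "\<lambda>x y. \<exists>a \<in> arrs Q. (src Q a = x \<and> tgt Q a = y) \<or> (src Q a = y \<and> tgt Q a = x)"
  have "?R\<^sup>*\<^sup>* u v" using assms unfolding connected_quiver_def by blast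
  then show ?thesis
  proof (induction rule: rtranclp_induct)
    case base
    have "uv_walk Q u [] u" by simp
    then show ?case by blast
  next
    case (step y z)
    then obtain w where w: "uv_walk Q u w y" by blast
    from step(2) obtain a where "a \<in> arrs Q" "(src Q a = y \<and> tgt Q a = z) \<or> (src Q a = z \<and> tgt Q a = y)"
      by blast
    then have "uv_walk Q u (w @ [Dir a]) z \<or> uv_walk Q u (w @ [Inv a]) z"
      using w by (auto simp: uv_walk_append)
    then show ?case by blast
  qed
qed

(* A shortest walk from a vertex set X to a disjoint vertex set Y is non-trivial,
   reduced, and uses no arrow of A or B, where the arrows of A have both ends in X
   and those of B both ends in Y: such an arrow would give a shortcut. *)
lemma shortest_bridge:
  assumes walk: "uv_walk Q x0 S0 y0" "x0 \<in> X" "y0 \<in> Y" and disjoint: "X \<inter> Y = {}"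
    and A: "\<And>a. a \<in> A \<Longrightarrow> src Q a \<in> X \<and> tgt Q a \<in> X"
    and B: "\<And>a. a \<in> B \<Longrightarrow> src Q a \<in> Y \<and> tgt Q a \<in> Y"
  obtains x S y where "x \<in> X" "y \<in> Y" "uv_walk Q x S y" "S \<noteq> []" "reduced S"
    "\<And>l. l \<in> set S \<Longrightarrow> arr_of l \<notin> A \<and> arr_of l \<notin> B"
proof -
  let ?bridge = "\<lambda>S. \<exists>x \<in> X. \<exists>y \<in> Y. uv_walk Q x S y"
  obtain S where S: "?bridge S" and shortest: "\<And>S'. ?bridge S' \<Longrightarrow> length S \<le> length S'"
    using ex_has_least_nat[of ?bridge S0 length] walk by blast
  from S obtain x y where xy: "x \<in> X" "y \<in> Y" "uv_walk Q x S y" by blast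
  have "S \<noteq> []" using xy disjoint by auto
  moreover have "reduced S"
  proof (rule ccontr)
    assume "\<not> reduced S"
    then obtain S' where S': "uv_walk Q x S' y" "length S' < length S" using cancel_backtrack xy(3) by metis
    have "length S \<le> length S'" by (rule shortest) (use S'(1) xy(1,2) in blast)
    then show False using S'(2) by simp
  qed
  moreover have "arr_of l \<notin> A \<and> arr_of l \<notin> B" if "l \<in> set S" for l
  proof -
    obtain q where q: "q < length S" "S ! q = l" using \<open>l \<in> set S\<close> by (metis in_set_conv_nth)
    have "arr_of l \<notin> A"
    proof
      assume "arr_of l \<in> A"
      then have "ltgt Q l \<in> X" using A by (cases l) auto
      then have "?bridge (drop (Suc q) S)" using uv_walk_drop_Suc[OF xy(3) q(1)] q(2) xy(2) by blast
      then have "length S \<le> length (drop (Suc q) S)" by (rule shortest)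
      then show False using q(1) by simp
    qed
    moreover have "arr_of l \<notin> B"
    proof
      assume "arr_of l \<in> B"
      then have "lsrc Q l \<in> Y" using B by (cases l) auto
      then have "?bridge (take q S)" using uv_walk_take_nth[OF xy(3) q(1)] q(2) xy(1) by blast
      then have "length S \<le> length (take q S)" by (rule shortest)
      then show False using q(1) by simp
    qed
    ultimately show ?thesis by blast
  qed
  ultimately show ?thesis using that xy by blast
qed

(* Positions on W
   are counted in letters: \<rho>1 occupies the positions < L1, \<rho>2 those \<ge> L2. *)
locale double_zero_near_band =
  fixes Q :: "('v, 'a, 'z) bquiver_scheme" and b :: "'a letter list"
    and \<beta> oo ii \<alpha> :: 'a and r1 r2 :: "'a list" and nu W :: "'a letter list"
  assumes band: "is_band Q b"
    and entry: "in_I Q [\<beta>, oo]" "oo \<in> arr_of ` set b"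
    and exit: "in_I Q [ii, \<alpha>]" "ii \<in> arr_of ` set b"
    and zero1: "in_I Q r1" and zero2: "in_I Q r2"
    and W_shape: "W = map Dir r1 @ nu @ map Dir r2"
    and W_walk: "is_walk Q W" and W_reduced: "reduced W"
begin

definition L1 :: nat where "L1 = length r1"
definition L2 :: nat where "L2 = length r1 + length nu"
definition start :: 'v where "start = lsrc Q (hd W)"
definition finish :: 'v where "finish = ltgt Q (last W)"

definition vW :: "nat \<Rightarrow> 'v" where "vW p = vertex_at Q start W p"

lemma L_bounds: "0 < L1" "L1 \<le> L2" "L2 < length W"
  using in_I_nonempty[OF zero1] in_I_nonempty[OF zero2] W_shape unfolding L1_def L2_def by auto

lemma W_nonempty: "W \<noteq> []"
  using L_bounds by auto

lemma W_uv_walk: "uv_walk Q start W finish"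
  using is_walk_uv_walk[OF W_walk W_nonempty] unfolding start_def finish_def .

lemma W_split:
  assumes "p \<le> length W"
  shows "uv_walk Q start (take p W) (vW p)" "uv_walk Q (vW p) (drop p W) finish"
  using uv_walk_take_drop[OF W_uv_walk assms] unfolding vW_def by auto

lemma W_split_reduced: "reduced (take p W)" "reduced (drop p W)"
  using W_reduced reduced_append[of "take p W" "drop p W"] by simp_all

lemma W_joint: "0 < p \<Longrightarrow> p < length W \<Longrightarrow> hd (drop p W) \<noteq> inv_letter (last (take p W))"
  using W_reduced W_nonempty reduced_append[of "take p W" "drop p W"] by simp

lemma W_prefix_shape: "L1 \<le> p \<Longrightarrow> take p W = map Dir r1 @ take (p - L1) (nu @ map Dir r2)"
  using W_shape unfolding L1_def by simp

lemma W_suffix_shape: "p \<le> L2 \<Longrightarrow> drop p W = drop p (map Dir r1 @ nu) @ map Dir r2"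
  using W_shape unfolding L2_def by simp

lemma W_letter: "p < length W \<Longrightarrow> lsrc Q (W ! p) = vW p \<and> ltgt Q (W ! p) = vW (Suc p)"
  using vertex_at_lsrc[OF W_uv_walk] vertex_at_Suc[of p W Q start] unfolding vW_def by simp

lemma doze_if_band_met_between:
  assumes "L1 \<le> p" "p \<le> L2" "vW p \<in> band_vertices Q b"
  shows "\<exists>w. is_DOZE Q w"
proof -
  have p: "0 < p" "p < length W" using assms L_bounds by auto
  show ?thesis
    by (rule doze_at_band_vertex[OF W_split(1) W_split_reduced(1) W_prefix_shape zero1
          W_split(2) W_split_reduced(2) W_suffix_shape zero2 W_joint band])
       (use assms p in auto)
qed

(* (b) W meets the band inside \<rho>1 but not at its end: leave W at the last band
   vertex in \<rho>1, enter the band through \<beta> oo and continue along W *)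
lemma doze_if_band_met_in_first_zero:
  assumes "p < L1" "vW p \<in> band_vertices Q b" "vW L1 \<notin> band_vertices Q b"
  shows "\<exists>w. is_DOZE Q w"
proof -
  define P where "P = {q. q < L1 \<and> vW q \<in> band_vertices Q b}"
  have P: "finite P" "p \<in> P" using assms P_def by auto
  define p0 where "p0 = Max P"
  have "p0 \<in> P" using Max_in[OF P(1)] P(2) p0_def by blast
  then have p0: "p0 < L1" "vW p0 \<in> band_vertices Q b" using P_def by auto
  have p0_last: "q \<le> p0" if "q < L1" "vW q \<in> band_vertices Q b" for q
    using Max_ge[OF P(1)] that p0_def P_def by blast
  have p0W: "p0 < length W" using p0(1) L_bounds by simp
  have off_band: "arr_of (W ! p0) \<notin> arr_of ` set b"
  proof
    assume "arr_of (W ! p0) \<in> arr_of ` set b"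
    then have "vW (Suc p0) \<in> band_vertices Q b"
      using band_letter_endpoints[OF band] W_letter[OF p0W] by metis
    then show False using p0_last[of "Suc p0"] assms(3) p0(1) by (cases "Suc p0 = L1") auto
  qed
  show ?thesis
    by (rule doze_by_entering[OF band entry W_split(2) p0(2) W_split_reduced(2) _ _
          W_suffix_shape zero2])
       (use p0W off_band p0(1) L_bounds in \<open>auto simp: hd_drop_conv_nth\<close>)
qed

(* (c) W meets the band only inside \<rho>2: follow W up to the first band vertex,
   go round the band and leave it through ii \<alpha> *)
lemma doze_if_band_met_in_last_zero:
  assumes "p \<le> length W" "vW p \<in> band_vertices Q b" "\<And>q. q \<le> L2 \<Longrightarrow> vW q \<notin> band_vertices Q b"
  shows "\<exists>w. is_DOZE Q w"
proof -
  define P where "P = (\<lambda>q. q \<le> length W \<and> vW q \<in> band_vertices Q b)"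
  define p0 where "p0 = (LEAST q. P q)"
  have p0: "p0 \<le> length W" "vW p0 \<in> band_vertices Q b"
    using LeastI[of P p] assms(1,2) P_def p0_def by auto
  have p0_first: "\<not> P q" if "q < p0" for q using not_less_Least that p0_def by blast
  have late: "L2 < p0" using assms(3) p0(2) by (meson not_less)
  have q: "p0 - 1 < length W" "0 < p0" using late p0(1) by auto
  have off_band: "arr_of (W ! (p0 - 1)) \<notin> arr_of ` set b"
  proof
    assume "arr_of (W ! (p0 - 1)) \<in> arr_of ` set b"
    then have "vW (p0 - 1) \<in> band_vertices Q b"
      using band_letter_endpoints[OF band] W_letter[OF q(1)] by metis
    then show False using p0_first[of "p0 - 1"] assms(3)[of "p0 - 1"] q P_def by auto
  qed
  show ?thesis
    by (rule doze_by_exiting[OF band exit W_split(1)[OF p0(1)] p0(2) W_split_reduced(1) _ _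
          W_prefix_shape zero1])
       (use q off_band late L_bounds p0(1) in \<open>auto simp: last_take_nth\<close>)
qed

definition bridge :: "nat \<Rightarrow> 'a letter list \<Rightarrow> 'v \<Rightarrow> bool" where
  "bridge p S c \<longleftrightarrow> p \<le> length W \<and> c \<in> band_vertices Q b \<and> uv_walk Q (vW p) S c \<and> S \<noteq> [] \<and>
     reduced S \<and> (\<forall>l \<in> set S. arr_of l \<notin> arr_of ` set W \<and> arr_of l \<notin> arr_of ` set b)"

lemma bridge_exists:
  assumes SA: "string_algebra Q" and conn: "connected_quiver Q"
    and avoid: "\<And>p. p \<le> length W \<Longrightarrow> vW p \<notin> band_vertices Q b"
  shows "\<exists>p S c. bridge p S c"
proof -
  let ?X = "vW ` {..length W}" and ?Y = "band_vertices Q b"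
  have "hd W \<in> set W" "hd b \<in> set b" using W_nonempty band_nonempty[OF band] by simp_all
  then have "start \<in> verts Q" "lsrc Q (hd b) \<in> verts Q"
    using letter_source_vertex[OF SA] uv_walk_arrs[OF W_uv_walk] band_arrs[OF band]
    unfolding start_def by blast+
  then obtain S0 where S0: "uv_walk Q (vW 0) S0 (lsrc Q (hd b))"
    using connected_walk[OF conn] unfolding vW_def vertex_at_def by auto
  have ends: "vW 0 \<in> ?X" "lsrc Q (hd b) \<in> ?Y" using \<open>hd b \<in> set b\<close> unfolding band_vertices_def by auto
  have disjoint: "?X \<inter> ?Y = {}" using avoid by auto
  have W_arrows: "src Q a \<in> ?X \<and> tgt Q a \<in> ?X" if "a \<in> arr_of ` set W" for a
    using walk_arrow_endpoints[OF W_uv_walk that] unfolding vW_def .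
  have b_arrows: "src Q a \<in> ?Y \<and> tgt Q a \<in> ?Y" if "a \<in> arr_of ` set b" for a
    using band_letter_endpoints[OF band, of "Dir a"] that by simp
  obtain x S c where S: "x \<in> ?X" "c \<in> ?Y" "uv_walk Q x S c" "S \<noteq> []" "reduced S"
      "\<And>l. l \<in> set S \<Longrightarrow> arr_of l \<notin> arr_of ` set W \<and> arr_of l \<notin> arr_of ` set b"
    using shortest_bridge[OF S0 ends disjoint W_arrows b_arrows] by metis
  from S(1) obtain p where "p \<le> length W" "x = vW p" by auto
  then have "bridge p S c" using S(2-6) unfolding bridge_def by simp
  then show ?thesis by blast
qed

(* (d1) the bridge starts inside \<rho>1: enter the band through \<beta> oo, come back
   along the bridge and continue along W *)
lemma doze_via_bridge_from_first_zero:
  assumes bridge: "bridge p S c" and early: "p < L1"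
  shows "\<exists>w. is_DOZE Q w"
proof -
  have S: "p \<le> length W" "c \<in> band_vertices Q b" "uv_walk Q (vW p) S c" "S \<noteq> []" "reduced S"
      "\<And>l. l \<in> set S \<Longrightarrow> arr_of l \<notin> arr_of ` set W \<and> arr_of l \<notin> arr_of ` set b"
    using bridge unfolding bridge_def by auto
  have pW: "p < length W" using early L_bounds by simp
  define T where "T = inv_walk S @ drop p W"
  have walk: "uv_walk Q c T finish" using uv_walk_inv[OF S(3)] W_split(2)[OF S(1)] T_def
    by (auto simp: uv_walk_append)
  have "arr_of (hd S) \<notin> arr_of ` set W" using S(4,6) by simp
  moreover have "arr_of (W ! p) \<in> arr_of ` set W" using pW by simp
  ultimately have "arr_of (hd S) \<noteq> arr_of (W ! p)" by auto
  then have "arr_of (last (inv_walk S)) \<noteq> arr_of (hd (drop p W))"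
    using S(4) pW by (simp add: last_inv_walk hd_drop_conv_nth)
  then have red: "reduced T" unfolding T_def
    using reduced_append_distinct_arrows[OF _ W_split_reduced(2), of "inv_walk S" p] S(5) by simp
  have off_band: "arr_of (hd T) \<notin> arr_of ` set b" using S(4,6) T_def by (simp add: hd_inv_walk)
  have shape: "T = (inv_walk S @ drop p (map Dir r1 @ nu)) @ map Dir r2"
    using W_suffix_shape[of p] early L_bounds T_def by simp
  show ?thesis
    by (rule doze_by_entering[OF band entry walk S(2) red _ off_band shape zero2]) (use S(4) T_def in simp)
qed

(* (d2) the bridge starts between the zero relations: insert the detour
   bridge, band loop, bridge backwards into W *)
lemma doze_via_bridge_between:
  assumes bridge: "bridge p S c" and "L1 \<le> p" "p \<le> L2"
  shows "\<exists>w. is_DOZE Q w"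
proof -
  have S: "p \<le> length W" "c \<in> band_vertices Q b" "uv_walk Q (vW p) S c" "S \<noteq> []" "reduced S"
      "\<And>l. l \<in> set S \<Longrightarrow> arr_of l \<notin> arr_of ` set W \<and> arr_of l \<notin> arr_of ` set b"
    using bridge unfolding bridge_def by auto
  have p: "0 < p" "p < length W" using assms L_bounds by auto
  obtain k where k: "k < length b" "lsrc Q (b ! k) = c" using band_vertex_index[OF S(2)] by blast
  define Y where "Y = band_loop b k"
  have Y: "uv_walk Q c Y c" "reduced (Y @ Y)" "Y \<noteq> []"
    using band_loop_closed[OF band k(1)] band_loop_nonempty[OF band] k(2) Y_def by auto
  then have Yr: "reduced Y" by (simp add: reduced_append)
  have Y_on_band: "arr_of (hd Y) \<in> arr_of ` set b" "arr_of (last Y) \<in> arr_of ` set b"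
    using Y(3) Y_def by (metis hd_in_set last_in_set image_eqI set_band_loop)+
  have S_off: "arr_of (hd S) \<notin> arr_of ` set W" "arr_of (hd S) \<notin> arr_of ` set b"
      "arr_of (last S) \<notin> arr_of ` set W" "arr_of (last S) \<notin> arr_of ` set b"
    using S(4,6) by auto
  define L where "L = S @ Y @ inv_walk S"
  have L_walk: "uv_walk Q (vW p) L (vW p)" using S(3) Y(1) uv_walk_inv[OF S(3)] L_def
    by (auto simp: uv_walk_append)
  have YS: "reduced (Y @ inv_walk S)"
    by (rule reduced_append_distinct_arrows)
       (use Y(2) S(4,5) Y_on_band S_off in \<open>auto simp: reduced_append hd_inv_walk\<close>)
  have "arr_of (last S) \<noteq> arr_of (hd (Y @ inv_walk S))" using Y(3) Y_on_band(1) S_off(4) by auto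
  then have L_reduced: "reduced L" unfolding L_def using reduced_append_distinct_arrows[OF S(5) YS] by simp
  have L_shape: "L = (S @ drop k b) @ b @ (take k b @ inv_walk S)" using L_def Y_def band_loop_def by simp
  have "W ! (p - 1) \<in> set W" "W ! p \<in> set W" using p by simp_all
  then have "arr_of (W ! (p - 1)) \<noteq> arr_of (hd S)" "arr_of (W ! p) \<noteq> arr_of (hd S)"
    using S_off(1) by (metis image_eqI)+
  then have arrows: "arr_of (last (take p W)) \<noteq> arr_of (hd S)" "arr_of (hd (drop p W)) \<noteq> arr_of (hd S)"
    using p by (simp_all add: last_take_nth hd_drop_conv_nth)
  have "hd L = hd S" "last L = inv_letter (hd S)" using S(4) L_def by (simp_all add: last_inv_walk)
  then have joints: "hd L \<noteq> inv_letter (last (take p W))" "hd (drop p W) \<noteq> inv_letter (last L)"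
    using distinct_arrows_no_backtrack[OF arrows(1)] arrows(2) by auto
  show ?thesis
    by (rule doze_by_inserting_loop[OF W_split(1)[OF S(1)] W_split_reduced(1) W_prefix_shape zero1
          W_split(2)[OF S(1)] W_split_reduced(2) W_suffix_shape zero2 L_walk L_reduced L_shape band joints])
       (use assms in simp_all)
qed

(* (d3) the bridge starts inside \<rho>2: follow W and the bridge to the band,
   go round it and leave through ii \<alpha> *)
lemma doze_via_bridge_from_last_zero:
  assumes bridge: "bridge p S c" and late: "L2 < p"
  shows "\<exists>w. is_DOZE Q w"
proof -
  have S: "p \<le> length W" "c \<in> band_vertices Q b" "uv_walk Q (vW p) S c" "S \<noteq> []" "reduced S"
      "\<And>l. l \<in> set S \<Longrightarrow> arr_of l \<notin> arr_of ` set W \<and> arr_of l \<notin> arr_of ` set b"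
    using bridge unfolding bridge_def by auto
  have p: "0 < p" "p - 1 < length W" using late S(1) L_bounds by auto
  define H where "H = take p W @ S"
  have walk: "uv_walk Q start H c" using W_split(1)[OF S(1)] S(3) H_def by (auto simp: uv_walk_append)
  have "arr_of (hd S) \<notin> arr_of ` set W" using S(4,6) by simp
  moreover have "arr_of (W ! (p - 1)) \<in> arr_of ` set W" using p(2) by simp
  ultimately have "arr_of (W ! (p - 1)) \<noteq> arr_of (hd S)" by auto
  then have "arr_of (last (take p W)) \<noteq> arr_of (hd S)"
    using S(1) p by (simp add: last_take_nth)
  then have red: "reduced H" unfolding H_def
    using reduced_append_distinct_arrows[OF W_split_reduced(1) S(5), of p] by simp
  have off_band: "arr_of (last H) \<notin> arr_of ` set b" using S(4,6) H_def by simp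
  have shape: "H = map Dir r1 @ (take (p - L1) (nu @ map Dir r2) @ S)"
    using W_prefix_shape[of p] late L_bounds H_def by simp
  show ?thesis
    by (rule doze_by_exiting[OF band exit walk S(2) red _ off_band shape zero1]) (use S(4) H_def in simp)
qed

theorem doze_exists:
  assumes SA: "string_algebra Q" and conn: "connected_quiver Q"
  shows "\<exists>w. is_DOZE Q w"
proof (cases "\<exists>p. L1 \<le> p \<and> p \<le> L2 \<and> vW p \<in> band_vertices Q b")
  case True
  then obtain p where "L1 \<le> p" "p \<le> L2" "vW p \<in> band_vertices Q b" by blast
  then show ?thesis by (rule doze_if_band_met_between)
next
  case not_between: False
  show ?thesis
  proof (cases "\<exists>p < L1. vW p \<in> band_vertices Q b")
    case True
    then obtain p where "p < L1" "vW p \<in> band_vertices Q b" by blast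
    moreover have "vW L1 \<notin> band_vertices Q b" using not_between L_bounds by blast
    ultimately show ?thesis by (rule doze_if_band_met_in_first_zero)
  next
    case not_first: False
    then have not_before: "vW q \<notin> band_vertices Q b" if "q \<le> L2" for q
      using not_between that by (cases "q < L1") auto
    show ?thesis
    proof (cases "\<exists>p \<le> length W. vW p \<in> band_vertices Q b")
      case True
      then obtain p where "p \<le> length W" "vW p \<in> band_vertices Q b" by blast
      then show ?thesis using doze_if_band_met_in_last_zero not_before by blast
    next
      case False
      then obtain p S c where bridge: "bridge p S c" using bridge_exists[OF SA conn] by blast
      consider "p < L1" | "L1 \<le> p" "p \<le> L2" | "L2 < p" by linarith
      then show ?thesis
      proof cases
        case 1 then show ?thesis by (rule doze_via_bridge_from_first_zero[OF bridge])
      next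
        case 2 then show ?thesis by (rule doze_via_bridge_between[OF bridge])
      next
        case 3 then show ?thesis by (rule doze_via_bridge_from_last_zero[OF bridge])
      qed
    qed
  qed
qed

end

theorem proposition2p2:
  fixes Q :: "('v, 'a) bquiver" and b :: "'a letter list" and \<alpha> \<beta> :: 'a
  assumes "string_algebra Q"
    and "connected_quiver Q"
    and "\<not> (\<exists>w. is_DOZE Q w)"
    and "is_band Q b"
    and "entering_arrow Q b \<beta>"
    and "exiting_arrow Q b \<alpha>"
  shows "\<not> (\<exists>w. is_double_zero Q w)"
proof
  assume "\<exists>w. is_double_zero Q w"
  then obtain W r1 nu r2 where W: "is_walk Q W" "reduced W" "in_I Q r1" "in_I Q r2"
      "W = map Dir r1 @ nu @ map Dir r2"
    unfolding is_double_zero_def by blast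
  obtain oo where oo: "oo \<in> arr_of ` set b" "in_I Q [\<beta>, oo]"
    using entering_port[OF assms(1,4,5)] by blast
  obtain ii where ii: "ii \<in> arr_of ` set b" "in_I Q [ii, \<alpha>]"
    using exiting_port[OF assms(1,4,6)] by blast
  interpret double_zero_near_band Q b \<beta> oo ii \<alpha> r1 r2 nu W
    by unfold_locales (use assms(4) oo ii W in auto)
  have "\<exists>w. is_DOZE Q w" by (rule doze_exists[OF assms(1,2)])
  with assms(3) show False by blast
qed

end
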